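(* Let $n,p$ be positive integers with $n-p-1>0$, let $N>0$, and let $p(Y\mid M)$ be the density of $Y\in\mathbb R^{n\times p}$ with independent entries $Y_{ai}\sim\mathrm N(M_{ai},N^{-1})$. Let $\pi_{\mathrm{MSVS2}}(M)=\det(M^\top M)^{-(n-p-1)/2}\prod_{i=1}^p\|M_{\cdot i}\|^{-\gamma_i}$, where $M_{\cdot i}$ is the $i$-th column of $M$. If $0\le\gamma_i\le p$ for every $i$, then $m_{\mathrm{MSVS2}}(Y)=\int p(Y\mid M)\pi_{\mathrm{MSVS2}}(M)\,\mathrm dM<\infty$ for every $Y$.
   Context: $\|\cdot\|$ is the Euclidean norm on $\mathbb R^n$. *)

theory Defs
  imports "HOL-Probability.Probability"
begin

text \<open>Matrices M in R^(n x p) are rendered as real^'p^'n (rows indexed by 'n,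
columns by 'p); entry M_{ai} is M $ a $ i.\<close>

definition mcol :: "real^'p^'n \<Rightarrow> 'p \<Rightarrow> real^'n" where
  "mcol M i = (\<chi> a. M $ a $ i)"

text \<open>Density p(Y | M): independent entries Y_{ai} ~ N(M_{ai}, 1/N),
i.e. standard deviation 1/sqrt N.\<close>
definition lik :: "real \<Rightarrow> real^'p^'n \<Rightarrow> real^'p^'n \<Rightarrow> real" where
  "lik N Y M = (\<Prod>a\<in>UNIV. \<Prod>i\<in>UNIV. normal_density (M $ a $ i) (1 / sqrt N) (Y $ a $ i))"

definition prior_MSVS2 :: "('p \<Rightarrow> real) \<Rightarrow> real^'p^'n \<Rightarrow> real" where
  "prior_MSVS2 \<gamma> M =
     det (transpose M ** M) powr (- (real CARD('n) - real CARD('p) - 1) / 2)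
     * (\<Prod>i\<in>UNIV. norm (mcol M i) powr (- \<gamma> i))"

definition m_MSVS2 :: "real \<Rightarrow> ('p \<Rightarrow> real) \<Rightarrow> real^'p^'n \<Rightarrow> ennreal" where
  "m_MSVS2 N \<gamma> Y = (\<integral>\<^sup>+ M. ennreal (lik N Y M * prior_MSVS2 \<gamma> M) \<partial>lborel)"

end

theory Submission
  imports Defs
begin

(*
  Integrate out the columns of M one at a time. With a = n - p - 1, the Gram determinant of the
  columns x_S is extended by a new column v as base times height,
    det G(x_S, v) = dist(v, span x_S)^2 * det G(x_S),
  and after an orthogonal change of coordinates in which K = n - p + 1 = a + 2 coordinate axes are
  orthogonal to span x_S (possible since dim span x_S <= p - 1), one gets
    int det G(x_S, v)^(-a/2) |v|^(-g) exp(-c |v|^2) dv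
      <= det G(x_S)^(-a/2) * int (t_1^2 + ... + t_K^2)^(-a/2) |t|^(-g) exp(-c |t|^2) dt.
  Splitting both negative powers into powers of single coordinates (the sum and |t| dominate each
  t_k^2 and |t_k|) bounds the last integral, uniformly in the chosen axes, by a product of
  one-dimensional integrals int |s|^(-e) exp(-c s^2) ds, and 0 <= g <= p allows all exponents e < 1.
  The likelihood contributes a Gaussian factor exp(-N |M_i|^2 / 4) for every column M_i.
*)

section \<open>Invariance of Lebesgue measure under orthogonal transformations\<close>

lemma borel_measurable_linear:
  fixes f :: "'a::euclidean_space \<Rightarrow> 'b::euclidean_space"
  assumes "linear f"
  shows "f \<in> borel_measurable borel"
  using assms linear_conv_bounded_linear by (blast intro: borel_measurable_continuous_onI linear_continuous_on)

definition basis_extension :: "('a::euclidean_space \<Rightarrow> 'b::euclidean_space) \<Rightarrow> 'a \<Rightarrow> 'b" where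
  "basis_extension \<beta> z = (\<Sum>d\<in>Basis. (z \<bullet> d) *\<^sub>R \<beta> d)"

lemma linear_basis_extension: "linear (basis_extension \<beta>)"
  by (simp add: basis_extension_def[abs_def] linear_iff inner_add_left scaleR_add_left sum.distrib
      scaleR_sum_right)

lemma inner_basis_extension:
  assumes \<beta>: "bij_betw \<beta> Basis Basis" and b: "b \<in> Basis"
  shows "basis_extension \<beta> z \<bullet> \<beta> b = z \<bullet> b"
proof -
  have "basis_extension \<beta> z \<bullet> \<beta> b = (\<Sum>d\<in>Basis. (z \<bullet> d) * (\<beta> d \<bullet> \<beta> b))"
    by (simp add: basis_extension_def inner_sum_left)
  also have "\<dots> = (\<Sum>d\<in>Basis. if d = b then z \<bullet> b else 0)"
    using \<beta> b bij_betwE[OF \<beta>] by (intro sum.cong) (auto simp: bij_betw_def inj_on_def inner_Basis)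
  finally show ?thesis
    using b by simp
qed

lemma basis_extension_inner:
  assumes \<beta>: "bij_betw \<beta> Basis Basis"
  shows "basis_extension \<beta> z \<bullet> basis_extension \<beta> w = z \<bullet> w"
proof -
  have "basis_extension \<beta> z \<bullet> basis_extension \<beta> w
      = (\<Sum>d\<in>Basis. (z \<bullet> d) * (basis_extension \<beta> w \<bullet> \<beta> d))"
    by (simp add: basis_extension_def[of _ z] inner_sum_left inner_commute[of "\<beta> _"])
  also have "\<dots> = z \<bullet> w"
    by (simp add: inner_basis_extension[OF \<beta>] euclidean_inner[of z w])
  finally show ?thesis .
qed

lemma basis_extension_inv_into_left:
  assumes \<beta>: "bij_betw \<beta> Basis Basis"
  shows "basis_extension (inv_into Basis \<beta>) (basis_extension \<beta> z) = z"
proof (rule euclidean_eqI)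
  fix b :: 'a
  assume b: "b \<in> Basis"
  have "basis_extension (inv_into Basis \<beta>) (basis_extension \<beta> z) \<bullet> inv_into Basis \<beta> (\<beta> b)
      = basis_extension \<beta> z \<bullet> \<beta> b"
    using b bij_betwE[OF \<beta>] by (intro inner_basis_extension bij_betw_inv_into[OF \<beta>]) auto
  then show "basis_extension (inv_into Basis \<beta>) (basis_extension \<beta> z) \<bullet> b = z \<bullet> b"
    using b \<beta> by (simp add: inner_basis_extension bij_betw_inv_into_left)
qed

lemma basis_extension_inv_into_right:
  assumes \<beta>: "bij_betw \<beta> Basis Basis"
  shows "basis_extension \<beta> (basis_extension (inv_into Basis \<beta>) y) = y"
proof -
  have "basis_extension (inv_into Basis (inv_into Basis \<beta>)) = basis_extension \<beta>"
    unfolding basis_extension_def using \<beta> by (simp add: inv_into_inv_into_eq)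
  then show ?thesis
    using basis_extension_inv_into_left[OF bij_betw_inv_into[OF \<beta>]] by metis
qed

lemma lborel_distr_basis_extension:
  fixes \<beta> :: "'a::euclidean_space \<Rightarrow> 'b::euclidean_space"
  assumes \<beta>: "bij_betw \<beta> Basis Basis"
  shows "distr lborel borel (basis_extension \<beta>) = lborel"
proof (rule lborel_eqI[symmetric])
  let ?pull = "\<lambda>l::'b. \<Sum>d\<in>Basis. (l \<bullet> \<beta> d) *\<^sub>R d"
  have [measurable]: "basis_extension \<beta> \<in> borel_measurable borel"
    by (rule borel_measurable_linear[OF linear_basis_extension])
  fix l u :: 'b
  assume le: "\<And>b. b \<in> Basis \<Longrightarrow> l \<bullet> b \<le> u \<bullet> b"
  have surj: "\<beta> ` Basis = Basis"
    using bij_betw_imp_surj_on[OF \<beta>] .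
  have "basis_extension \<beta> z \<in> box l u
      \<longleftrightarrow> (\<forall>c\<in>\<beta> ` Basis. l \<bullet> c < basis_extension \<beta> z \<bullet> c \<and> basis_extension \<beta> z \<bullet> c < u \<bullet> c)" for z
    unfolding surj by (simp add: mem_box)
  also have "\<dots> z \<longleftrightarrow> (\<forall>b\<in>Basis. l \<bullet> \<beta> b < z \<bullet> b \<and> z \<bullet> b < u \<bullet> \<beta> b)" for z
    by (simp add: inner_basis_extension[OF \<beta>])
  finally have "basis_extension \<beta> -` box l u = box (?pull l) (?pull u)"
    by (auto simp: mem_box inner_sum_left inner_Basis if_distrib cong: if_cong)
  moreover have "(\<Prod>b\<in>Basis. (?pull u - ?pull l) \<bullet> b) = (\<Prod>c\<in>Basis. (u - l) \<bullet> c)"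
    by (auto simp: inner_diff_left inner_sum_left inner_Basis if_distrib cong: if_cong
        intro!: prod.reindex_bij_betw[OF \<beta>] prod.cong)
  ultimately show "emeasure (distr lborel borel (basis_extension \<beta>)) (box l u) = (\<Prod>c\<in>Basis. (u - l) \<bullet> c)"
    using le bij_betwE[OF \<beta>]
    by (simp add: emeasure_distr emeasure_lborel_box_eq inner_diff_left inner_sum_left inner_Basis
        if_distrib cong: if_cong)
qed simp

lemma lborel_distr_orthogonal_transformation_wellorder:
  fixes f :: "real^'n::{finite,wellorder} \<Rightarrow> real^'n::_"
  assumes f: "orthogonal_transformation f"
  shows "distr lborel borel f = lborel"
proof (rule lborel_eqI[symmetric])
  have [measurable]: "f \<in> borel_measurable borel"
    by (rule borel_measurable_linear[OF orthogonal_transformation_linear[OF f]])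
  have g: "orthogonal_transformation (inv f)"
    using f by (rule orthogonal_transformation_inv)
  fix l u :: "real^'n::{finite,wellorder}"
  assume le: "\<And>b. b \<in> Basis \<Longrightarrow> l \<bullet> b \<le> u \<bullet> b"
  have "f -` box l u \<in> sets lborel"
    using measurable_sets_borel[of f borel "box l u"] by simp
  then have "emeasure (distr lborel borel f) (box l u) = emeasure lebesgue (f -` box l u)"
    by (simp add: emeasure_distr emeasure_completion)
  also have "\<dots> = emeasure lebesgue (inv f ` box l u)"
    using f by (simp add: bij_vimage_eq_inv_image orthogonal_transformation_bij)
  also have "\<dots> = measure lebesgue (inv f ` box l u)"
    using measurable_orthogonal_image[OF g, of "box l u"] by (simp add: emeasure_eq_measure2)
  also have "\<dots> = measure lebesgue (box l u)"
    using measure_orthogonal_image[OF g, of "box l u"] by simp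
  finally show "emeasure (distr lborel borel f) (box l u) = (\<Prod>b\<in>Basis. (u - l) \<bullet> b)"
    using le by (simp add: measure_completion emeasure_lborel_box_eq measure_def)
qed simp

text \<open>The library proves invariance only for wellordered index types. We transfer it to an
  arbitrary finite index type \<open>'n\<close> through a relabelling of coordinates
  \<open>real^'n \<times> real^'n \<cong> real^('n bit0)\<close>, the index type \<open>'n bit0\<close> being wellordered.\<close>

lemma lborel_distr_orthogonal_transformation_prod:
  fixes f :: "real^'n::finite \<Rightarrow> real^'n"
  assumes f: "orthogonal_transformation f"
  shows "distr lborel borel (\<lambda>(v, w). (f v, w)) = (lborel :: ((real^'n) \<times> (real^'n)) measure)"
proof -
  define F :: "(real^'n) \<times> (real^'n) \<Rightarrow> (real^'n) \<times> (real^'n)" where "F = (\<lambda>(v, w). (f v, w))"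
  have "card (Basis :: ((real^'n) \<times> (real^'n)) set) = card (Basis :: (real^'n bit0) set)"
    by simp
  then obtain \<beta> :: "(real^'n) \<times> (real^'n) \<Rightarrow> real^'n bit0" where \<beta>: "bij_betw \<beta> Basis Basis"
    by (metis finite_Basis finite_same_card_bij)
  define \<beta>' where "\<beta>' = inv_into Basis \<beta>"
  have \<beta>': "bij_betw \<beta>' Basis Basis"
    unfolding \<beta>'_def by (rule bij_betw_inv_into[OF \<beta>])
  have TT': "basis_extension \<beta> (basis_extension \<beta>' y) = y" for y
    unfolding \<beta>'_def by (rule basis_extension_inv_into_right[OF \<beta>])
  have T'T: "basis_extension \<beta>' (basis_extension \<beta> z) = z" for z
    unfolding \<beta>'_def by (rule basis_extension_inv_into_left[OF \<beta>])
  have "linear F"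
    using orthogonal_transformation_linear[OF f] by (auto simp: F_def linear_iff)
  then have [measurable]: "F \<in> borel_measurable borel"
    "basis_extension \<beta> \<in> borel_measurable borel" "basis_extension \<beta>' \<in> borel_measurable borel"
    by (simp_all add: borel_measurable_linear linear_basis_extension)
  let ?G = "basis_extension \<beta> \<circ> F \<circ> basis_extension \<beta>'"
  have "orthogonal_transformation ?G"
    unfolding orthogonal_transformation_def
  proof safe
    show "linear ?G"
      using \<open>linear F\<close> by (intro linear_compose linear_basis_extension)
    have F_inner: "F x \<bullet> F x' = x \<bullet> x'" for x x'
      using f by (auto simp: F_def inner_Pair orthogonal_transformation_def split: prod.splits)
    fix y y'
    have "?G y \<bullet> ?G y' = basis_extension \<beta>' y \<bullet> basis_extension \<beta>' y'"
      by (simp add: basis_extension_inner[OF \<beta>] F_inner)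
    also have "\<dots> = basis_extension \<beta> (basis_extension \<beta>' y) \<bullet> basis_extension \<beta> (basis_extension \<beta>' y')"
      by (rule basis_extension_inner[OF \<beta>, symmetric])
    finally show "?G y \<bullet> ?G y' = y \<bullet> y'"
      by (simp add: TT')
  qed
  then have G: "distr lborel borel ?G = lborel"
    by (rule lborel_distr_orthogonal_transformation_wellorder)
  have "F = basis_extension \<beta>' \<circ> ?G \<circ> basis_extension \<beta>"
    by (simp add: fun_eq_iff T'T)
  then have "distr lborel borel F
      = distr (distr (distr lborel borel (basis_extension \<beta>)) borel ?G) borel (basis_extension \<beta>')"
    by (simp add: distr_distr comp_assoc)
  also have "\<dots> = lborel"
    by (simp add: lborel_distr_basis_extension[OF \<beta>] lborel_distr_basis_extension[OF \<beta>'] G)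
  finally show ?thesis
    by (simp add: F_def)
qed

lemma lborel_distr_orthogonal_transformation:
  fixes f :: "real^'n::finite \<Rightarrow> real^'n"
  assumes f: "orthogonal_transformation f"
  shows "distr lborel borel f = lborel"
proof (rule lborel_eqI[symmetric])
  let ?F = "(\<lambda>(v, w). (f v, w)) :: (real^'n) \<times> (real^'n) \<Rightarrow> (real^'n) \<times> (real^'n)"
  let ?C = "box 0 One :: (real^'n) set"
  have [measurable]: "f \<in> borel_measurable borel"
    by (rule borel_measurable_linear[OF orthogonal_transformation_linear[OF f]])
  have "linear ?F"
    using orthogonal_transformation_linear[OF f] by (auto simp: linear_iff)
  then have "?F \<in> borel_measurable borel"
    by (rule borel_measurable_linear)
  fix l u :: "real^'n"
  assume le: "\<And>b. b \<in> Basis \<Longrightarrow> l \<bullet> b \<le> u \<bullet> b"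
  have C: "emeasure lborel ?C = 1"
    by (simp add: emeasure_lborel_box_eq inner_Basis)
  have "f -` box l u \<in> sets lborel"
    using measurable_sets_borel[of f borel "box l u"] by simp
  then have "emeasure lborel (f -` box l u) = emeasure lborel ((f -` box l u) \<times> ?C)"
    using C by (simp add: lborel_prod[symmetric] lborel.emeasure_pair_measure_Times)
  also have "(f -` box l u) \<times> ?C = ?F -` (box l u \<times> ?C)"
    by auto
  also have "emeasure lborel \<dots> = emeasure (distr lborel borel ?F) (box l u \<times> ?C)"
    using \<open>?F \<in> borel_measurable borel\<close>
    by (subst emeasure_distr) (auto simp: measurable_lborel2 intro: borel_open open_Times)
  also have "\<dots> = emeasure lborel (box l u \<times> ?C)"
    by (simp only: lborel_distr_orthogonal_transformation_prod[OF f])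
  also have "\<dots> = emeasure lborel (box l u)"
    using C by (simp add: lborel_prod[symmetric] lborel.emeasure_pair_measure_Times)
  finally show "emeasure (distr lborel borel f) (box l u) = (\<Prod>b\<in>Basis. (u - l) \<bullet> b)"
    using le by (simp add: emeasure_distr emeasure_lborel_box_eq)
qed simp

lemma nn_integral_orthogonal_transformation:
  fixes f :: "real^'n::finite \<Rightarrow> real^'n"
  assumes f: "orthogonal_transformation f" and F: "F \<in> borel_measurable borel"
  shows "(\<integral>\<^sup>+ v. F v \<partial>lborel) = (\<integral>\<^sup>+ t. F (f t) \<partial>lborel)"
proof -
  have "f \<in> borel_measurable borel"
    by (rule borel_measurable_linear[OF orthogonal_transformation_linear[OF f]])
  then show ?thesis
    using F by (subst (1) lborel_distr_orthogonal_transformation[OF f, symmetric])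
      (simp add: nn_integral_distr measurable_lborel2)
qed

section \<open>Gram determinants\<close>

text \<open>\<open>gram_matrix S x\<close> is the Gram matrix of the subfamily \<open>(x i)\<^sub>i\<^sub>\<in>\<^sub>S\<close>, padded with the identity
  outside \<open>S \<times> S\<close> so that it is a square matrix over the fixed index type \<open>'p\<close>.\<close>

definition gram_matrix :: "'p::finite set \<Rightarrow> ('p \<Rightarrow> 'a::euclidean_space) \<Rightarrow> real^'p^'p" where
  "gram_matrix S x = (\<chi> i j. if i \<in> S \<and> j \<in> S then x i \<bullet> x j else if i = j then 1 else 0)"

definition gram_det :: "'p::finite set \<Rightarrow> ('p \<Rightarrow> 'a::euclidean_space) \<Rightarrow> real" where
  "gram_det S x = det (gram_matrix S x)"

lemma gram_det_UNIV: "gram_det UNIV x = det (transpose (\<chi> a i. x i $ a) ** (\<chi> a i. x i $ a))"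
  unfolding gram_det_def gram_matrix_def
  by (rule arg_cong[where f=det]) (simp add: vec_eq_iff matrix_matrix_mult_def transpose_def inner_vec_def)

lemma gram_det_add_multiple:
  assumes j: "j \<notin> S" and i: "i \<in> S"
  shows "gram_det (insert j S) (x(j := x j + c *\<^sub>R x i)) = gram_det (insert j S) x"
proof -
  let ?A = "gram_matrix (insert j S) x"
  have ij: "j \<noteq> i" using i j by auto
  let ?B = "(\<chi> k. if k = j then row j ?A + c *s row i ?A else row k ?A)"
  let ?C = "(\<chi> k. if k = j then row j (transpose ?B) + c *s row i (transpose ?B) else row k (transpose ?B))"
  have "gram_matrix (insert j S) (x(j := x j + c *\<^sub>R x i)) $ k $ l = ?C $ k $ l" for k l
    using i j ij by (cases "k = j"; cases "l = j")
      (auto simp: gram_matrix_def row_def transpose_def inner_add_left inner_add_right inner_commute,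
        simp add: distrib_left)
  then have "gram_matrix (insert j S) (x(j := x j + c *\<^sub>R x i)) = ?C"
    by (simp add: vec_eq_iff)
  moreover have "det ?C = det ?A"
  proof -
    have "det ?C = det (transpose ?B)"
      by (rule det_row_operation[OF ij])
    also have "\<dots> = det ?A"
      unfolding det_transpose by (rule det_row_operation[OF ij])
    finally show ?thesis .
  qed
  ultimately show ?thesis
    unfolding gram_det_def by simp
qed

lemma gram_det_add_span:
  assumes j: "j \<notin> S" and w: "w \<in> span (x ` S)"
  shows "gram_det (insert j S) (x(j := x j + w)) = gram_det (insert j S) x"
  using w
proof (induction w rule: span_induct_alt)
  case base
  then show ?case by simp
next
  case (step c z y)
  then obtain i where i: "i \<in> S" "z = x i" by blast
  let ?x' = "x(j := x j + y)"
  have "x(j := x j + (c *\<^sub>R z + y)) = ?x'(j := ?x' j + c *\<^sub>R ?x' i)"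
    using i j by (auto simp: fun_eq_iff algebra_simps)
  then have "gram_det (insert j S) (x(j := x j + (c *\<^sub>R z + y))) = gram_det (insert j S) ?x'"
    using gram_det_add_multiple[OF j i(1), of ?x' c] by simp
  also have "\<dots> = gram_det (insert j S) x" by (rule step.IH)
  finally show ?case .
qed

lemma gram_det_insert_orthogonal:
  assumes j: "j \<notin> S" and r: "\<And>i. i \<in> S \<Longrightarrow> r \<bullet> x i = 0"
  shows "gram_det (insert j S) (x(j := r)) = (norm r)\<^sup>2 * gram_det S x"
proof -
  let ?G = "gram_matrix S x"
  have "gram_matrix (insert j S) (x(j := r)) = (\<chi> k. if k = j then (r \<bullet> r) *s row k ?G else row k ?G)"
    using j r by (auto simp: vec_eq_iff gram_matrix_def row_def inner_commute)
  moreover have "(\<chi> k. row k ?G) = ?G"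
    by (simp add: vec_eq_iff row_def)
  ultimately show ?thesis
    unfolding gram_det_def power2_norm_eq_inner
    using det_row_mul[of j "r \<bullet> r" "\<lambda>k. row k ?G" "\<lambda>k. row k ?G"] by simp
qed

lemma gram_det_insert:
  assumes j: "j \<notin> S"
  obtains y where "y \<in> span (x ` S)"
    "gram_det (insert j S) (x(j := v)) = (norm (v - y))\<^sup>2 * gram_det S x"
proof -
  obtain y z where yz: "v = y + z" "y \<in> span (x ` S)" "\<And>w. w \<in> span (x ` S) \<Longrightarrow> orthogonal z w"
    using orthogonal_subspace_decomp_exists[of "x ` S" v] by blast
  have z: "z \<bullet> x i = 0" if "i \<in> S" for i
    using yz(3)[of "x i"] that span_base[of "x i" "x ` S"] by (auto simp: orthogonal_def)
  let ?x' = "x(j := z)"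
  have "span (?x' ` S) = span (x ` S)"
    using j by (metis fun_upd_image)
  then have "gram_det (insert j S) (x(j := v)) = gram_det (insert j S) ?x'"
    using gram_det_add_span[OF j, of y ?x'] yz(1,2) by (simp add: add.commute)
  also have "\<dots> = (norm z)\<^sup>2 * gram_det S x"
    using gram_det_insert_orthogonal[OF j, of z x] z by simp
  finally show ?thesis
    using that[of y] yz by simp
qed

lemma gram_det_empty: "gram_det {} x = 1"
  unfolding gram_det_def gram_matrix_def by (simp add: mat_def[symmetric])

lemma gram_det_nonneg: "gram_det S x \<ge> 0"
proof -
  have "finite S" by simp
  then show ?thesis
  proof (induction S arbitrary: x rule: finite_induct)
    case empty
    then show ?case by (simp add: gram_det_empty)
  next
    case (insert j S)
    obtain y where "gram_det (insert j S) (x(j := x j)) = (norm (x j - y))\<^sup>2 * gram_det S x"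
      using gram_det_insert[OF insert(2)] by blast
    then show ?case using insert.IH[of x] by simp
  qed
qed

lemma borel_measurable_gram_det:
  fixes X :: "'b \<Rightarrow> 'p::finite \<Rightarrow> 'a::euclidean_space"
  assumes X: "\<And>i. i \<in> S \<Longrightarrow> (\<lambda>\<omega>. X \<omega> i) \<in> borel_measurable M"
  shows "(\<lambda>\<omega>. gram_det S (X \<omega>)) \<in> borel_measurable M"
proof -
  have entry: "(\<lambda>\<omega>. gram_matrix S (X \<omega>) $ i $ k) \<in> borel_measurable M" for i k
    using X[of i] X[of k] by (cases "i \<in> S \<and> k \<in> S") (auto simp: gram_matrix_def)
  show ?thesis
    unfolding gram_det_def det_def
    by (intro borel_measurable_sum borel_measurable_times borel_measurable_prod entry borel_measurable_const)
qed

lemma orthogonal_transformation_from_orthonormal_family: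
  fixes \<beta> :: "'n::finite \<Rightarrow> real^'n"
  assumes "\<And>k. norm (\<beta> k) = 1" and "\<And>k l. k \<noteq> l \<Longrightarrow> orthogonal (\<beta> k) (\<beta> l)"
  shows "\<exists>f :: real^'n \<Rightarrow> real^'n. orthogonal_transformation f \<and> (\<forall>k. f (axis k 1) = \<beta> k)"
proof -
  define Q :: "real^'n^'n" where "Q = (\<chi> i j. \<beta> j $ i)"
  have "orthogonal_matrix Q"
    using assms by (simp add: Q_def orthogonal_matrix_orthonormal_columns column_def)
  then have "orthogonal_transformation (\<lambda>t. Q *v t)"
    by (simp add: orthogonal_transformation_matrix matrix_vector_mul_linear)
  moreover have "Q *v axis k 1 = \<beta> k" for k
    by (simp add: Q_def matrix_vector_mult_def axis_def vec_eq_iff if_distrib cong: if_cong)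
  ultimately show ?thesis
    by blast
qed

lemma orthonormal_basis_adapted_to_subspace:
  fixes V :: "(real^'n::finite) set"
  assumes V: "subspace V"
  obtains \<beta> :: "'n \<Rightarrow> real^'n" and A :: "'n set"
  where "\<And>k. norm (\<beta> k) = 1" "\<And>k l. k \<noteq> l \<Longrightarrow> orthogonal (\<beta> k) (\<beta> l)"
    "card A = CARD('n) - dim V" "\<And>k v. k \<in> A \<Longrightarrow> v \<in> V \<Longrightarrow> \<beta> k \<bullet> v = 0"
proof -
  define W where "W = {w. \<forall>v\<in>V. orthogonal v w}"
  have W: "subspace W"
    unfolding W_def by (rule subspace_orthogonal_to_vectors)
  have dVW: "dim W + dim V = CARD('n)"
    using dim_subspace_orthogonal_to_vectors[of V UNIV] V by (simp add: W_def)
  obtain BV where BV: "BV \<subseteq> V" "pairwise orthogonal BV" "\<And>x. x \<in> BV \<Longrightarrow> norm x = 1"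
      "independent BV" "card BV = dim V"
    using orthonormal_basis_subspace[OF V] by metis
  obtain BW where BW: "BW \<subseteq> W" "pairwise orthogonal BW" "\<And>x. x \<in> BW \<Longrightarrow> norm x = 1"
      "independent BW" "card BW = dim W"
    using orthonormal_basis_subspace[OF W] by metis
  have cross: "v \<bullet> w = 0" if "v \<in> V" "w \<in> W" for v w
    using that by (auto simp: W_def orthogonal_def)
  have disj: "BV \<inter> BW = {}"
    using BV(1,3) BW(1) cross by fastforce
  have finB: "finite BV" "finite BW"
    using BV(4) BW(4) by (simp_all add: independent_imp_finite)
  then have "card (BV \<union> BW) = CARD('n)"
    using card_Un_disjoint[OF finB disj] BV(5) BW(5) dVW by simp
  then obtain \<beta> where \<beta>: "bij_betw \<beta> (UNIV::'n set) (BV \<union> BW)"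
    using finite_same_card_bij[of "UNIV::'n set" "BV \<union> BW"] finB by auto
  show ?thesis
  proof
    show "norm (\<beta> k) = 1" for k
      using bij_betwE[OF \<beta>] BV(3) BW(3) by auto
    show "orthogonal (\<beta> k) (\<beta> l)" if "k \<noteq> l" for k l
    proof -
      have "\<beta> k \<noteq> \<beta> l" "\<beta> k \<in> BV \<union> BW" "\<beta> l \<in> BV \<union> BW"
        using \<beta> that by (auto simp: bij_betw_def inj_on_def)
      then show ?thesis
        using BV(1,2) BW(1,2) cross[of "\<beta> k" "\<beta> l"] cross[of "\<beta> l" "\<beta> k"]
        by (auto simp: pairwise_def orthogonal_def inner_commute subset_iff)
    qed
    have "bij_betw \<beta> {k. \<beta> k \<in> BW} BW"
      using \<beta> by (auto simp: bij_betw_def inj_on_def)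
    then show "card {k. \<beta> k \<in> BW} = CARD('n) - dim V"
      using bij_betw_same_card BW(5) dVW by fastforce
    show "\<beta> k \<bullet> v = 0" if "k \<in> {k. \<beta> k \<in> BW}" "v \<in> V" for k v
      using that BW(1) cross[of v "\<beta> k"] by (auto simp: inner_commute)
  qed
qed

lemma orthogonal_transformation_adapted_to_subspace:
  fixes V :: "(real^'n::finite) set"
  assumes V: "subspace V" and dim: "dim V + K \<le> CARD('n)"
  obtains f :: "real^'n \<Rightarrow> real^'n" and A :: "'n set"
  where "orthogonal_transformation f" "card A = K"
    "\<And>k v. k \<in> A \<Longrightarrow> v \<in> V \<Longrightarrow> f (axis k 1) \<bullet> v = 0"
proof -
  obtain \<beta> :: "'n \<Rightarrow> real^'n" and A0 where unit: "\<And>k. norm (\<beta> k) = 1"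
    and orth: "\<And>k l. k \<noteq> l \<Longrightarrow> orthogonal (\<beta> k) (\<beta> l)"
    and A0: "card A0 = CARD('n) - dim V" "\<And>k v. k \<in> A0 \<Longrightarrow> v \<in> V \<Longrightarrow> \<beta> k \<bullet> v = 0"
    using orthonormal_basis_adapted_to_subspace[OF V] by metis
  have "\<exists>f :: real^'n \<Rightarrow> real^'n. orthogonal_transformation f \<and> (\<forall>k. f (axis k 1) = \<beta> k)"
    using unit orth by (rule orthogonal_transformation_from_orthonormal_family)
  then obtain f :: "real^'n \<Rightarrow> real^'n"
    where f: "orthogonal_transformation f" and f_axis: "\<And>k. f (axis k 1) = \<beta> k"
    by blast
  have "K \<le> card A0"
    using A0(1) dim by simp
  then obtain A where A: "A \<subseteq> A0" "card A = K"
    by (rule obtain_subset_with_card_n)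
  have "f (axis k 1) \<bullet> v = 0" if "k \<in> A" "v \<in> V" for k v
    using that A(1) A0(2) by (auto simp: f_axis)
  then show ?thesis
    using that[OF f A(2)] by blast
qed

lemma norm_vec_sq: "(norm (t :: real^'n::finite))\<^sup>2 = (\<Sum>k\<in>UNIV. (t $ k)\<^sup>2)"
  unfolding power2_norm_eq_inner inner_vec_def by (simp add: power2_eq_square)

lemma sum_sq_coordinates_le:
  fixes f :: "real^'n::finite \<Rightarrow> real^'n"
  assumes f: "orthogonal_transformation f" and y: "\<And>k. k \<in> A \<Longrightarrow> f (axis k 1) \<bullet> y = 0"
  shows "(\<Sum>k\<in>A. (t $ k)\<^sup>2) \<le> (norm (f t - y))\<^sup>2"
proof -
  obtain s where s: "f s = f t - y"
    using orthogonal_transformation_surj[OF f] by (metis surjD)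
  have coord: "f (axis k 1) \<bullet> f z = z $ k" for z k
    using f by (simp add: orthogonal_transformation_def inner_axis')
  have "t $ k = s $ k" if "k \<in> A" for k
    using coord[of k t] coord[of k s] y[OF that] by (simp add: s inner_diff_right)
  then have "(\<Sum>k\<in>A. (t $ k)\<^sup>2) = (\<Sum>k\<in>A. (s $ k)\<^sup>2)"
    by simp
  also have "\<dots> \<le> (\<Sum>k\<in>UNIV. (s $ k)\<^sup>2)"
    by (intro sum_mono2) auto
  also have "\<dots> = (norm (f t - y))\<^sup>2"
    using orthogonal_transformation_norm[OF f, of s] by (simp add: s[symmetric] norm_vec_sq)
  finally show ?thesis .
qed

lemma gram_det_insert_ge:
  fixes f :: "real^'n::finite \<Rightarrow> real^'n"
  assumes j: "j \<notin> S" and f: "orthogonal_transformation f"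
    and A: "\<And>k i. k \<in> A \<Longrightarrow> i \<in> S \<Longrightarrow> f (axis k 1) \<bullet> x i = 0"
  shows "(\<Sum>k\<in>A. (t $ k)\<^sup>2) * gram_det S x \<le> gram_det (insert j S) (x(j := f t))"
proof -
  obtain y where y: "y \<in> span (x ` S)"
    and eq: "gram_det (insert j S) (x(j := f t)) = (norm (f t - y))\<^sup>2 * gram_det S x"
    using gram_det_insert[OF j] by metis
  have "f (axis k 1) \<bullet> y = 0" if "k \<in> A" for k
    using orthogonal_to_span[OF y, of "f (axis k 1)"] A[OF that] by (auto simp: orthogonal_def)
  then have "(\<Sum>k\<in>A. (t $ k)\<^sup>2) \<le> (norm (f t - y))\<^sup>2"
    by (rule sum_sq_coordinates_le[OF f])
  then show ?thesis
    unfolding eq by (intro mult_right_mono gram_det_nonneg)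
qed

section \<open>Radial weights\<close>

definition radial_weight :: "real \<Rightarrow> real \<Rightarrow> 'a::real_normed_vector \<Rightarrow> real" where
  "radial_weight c g v = norm v powr (- g) * exp (- c * (norm v)\<^sup>2)"

lemma radial_weight_nonneg: "radial_weight c g v \<ge> 0"
  by (simp add: radial_weight_def)

lemma borel_measurable_radial_weight [measurable]: "radial_weight c g \<in> borel_measurable borel"
  unfolding radial_weight_def by measurable

lemma nn_integral_exp_neg_sq_finite:
  assumes c: "c > 0"
  shows "(\<integral>\<^sup>+ s. ennreal (exp (- c * s\<^sup>2)) \<partial>lborel) < \<infinity>"
proof -
  define \<sigma> where "\<sigma> = sqrt (1 / (2 * c))"
  have \<sigma>: "\<sigma> > 0" "2 * \<sigma>\<^sup>2 = 1 / c"
    using c by (simp_all add: \<sigma>_def)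
  define C where "C = sqrt (2 * pi * \<sigma>\<^sup>2)"
  have C: "C > 0"
    using \<sigma> by (simp add: C_def)
  have "exp (- c * s\<^sup>2) = C * normal_density 0 \<sigma> s" for s
    using \<sigma> c C by (simp add: normal_density_def C_def)
  then have "(\<integral>\<^sup>+ s. ennreal (exp (- c * s\<^sup>2)) \<partial>lborel)
      = ennreal C * (\<integral>\<^sup>+ s. ennreal (normal_density 0 \<sigma> s) \<partial>lborel)"
    using C by (simp add: ennreal_mult nn_integral_cmult)
  also have "(\<integral>\<^sup>+ s. ennreal (normal_density 0 \<sigma> s) \<partial>lborel) = 1"
    using \<sigma> by (subst nn_integral_eq_integral) (auto intro: integrable_normal_density)
  finally show ?thesis by simp
qed

lemma nn_integral_radial_weight_real_finite:
  assumes e: "0 \<le> e" "e < 1" and c: "c > 0"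
  shows "(\<integral>\<^sup>+ s. ennreal (radial_weight c e (s::real)) \<partial>lborel) < \<infinity>"
proof -
  let ?f = "\<lambda>s::real. ennreal (indicator {0..1} s * s powr (-e))"
  have near0: "(\<integral>\<^sup>+ s. ?f s \<partial>lborel) < \<infinity>"
  proof -
    have "((\<lambda>s. s powr (-e)) has_integral (1 powr (-e + 1) / (-e + 1))) {0..1::real}"
      by (rule has_integral_powr_from_0) (use e in auto)
    then show ?thesis
      by (subst nn_integral_has_integral_lebesgue) auto
  qed
  have pw: "ennreal (radial_weight c e s) \<le> ?f s + ?f (-s) + ennreal (exp (- c * s\<^sup>2))" for s
  proof (cases "\<bar>s\<bar> \<le> 1")
    case True
    have "radial_weight c e s \<le> \<bar>s\<bar> powr (-e) * 1"
      using c unfolding radial_weight_def real_norm_def by (intro mult_left_mono) auto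
    also have "\<dots> = indicator {0..1} s * s powr (-e) + indicator {0..1} (-s) * (-s) powr (-e)"
      using True by (cases "s \<ge> 0") (auto simp: indicator_def)
    finally have "radial_weight c e s
        \<le> indicator {0..1} s * s powr (-e) + indicator {0..1} (-s) * (-s) powr (-e) + exp (- c * s\<^sup>2)"
      using exp_ge_zero[of "- c * s\<^sup>2"] by linarith
    then show ?thesis
      by (subst ennreal_plus[symmetric], simp, simp)+ (rule ennreal_leI)
  next
    case False
    then have "\<bar>s\<bar> powr (-e) \<le> 1"
      using e powr_mono2'[of "-e" 1 "\<bar>s\<bar>"] by auto
    then have "radial_weight c e s \<le> exp (- c * s\<^sup>2)"
      unfolding radial_weight_def real_norm_def power2_abs by (intro mult_left_le_one_le) auto
    then show ?thesis
      by (metis add.commute add_increasing2 ennreal_leI zero_le)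
  qed
  have "(\<integral>\<^sup>+ s. ennreal (radial_weight c e (s::real)) \<partial>lborel)
      \<le> (\<integral>\<^sup>+ s. ?f s + ?f (-s) + ennreal (exp (- c * s\<^sup>2)) \<partial>lborel)"
    by (intro nn_integral_mono pw)
  also have "\<dots> = (\<integral>\<^sup>+ s. ?f s \<partial>lborel) + (\<integral>\<^sup>+ s. ?f (-s) \<partial>lborel)
      + (\<integral>\<^sup>+ s. ennreal (exp (- c * s\<^sup>2)) \<partial>lborel)"
    by (simp add: nn_integral_add)
  also have "(\<integral>\<^sup>+ s. ?f (-s) \<partial>lborel) = (\<integral>\<^sup>+ s. ?f s \<partial>lborel)"
    using nn_integral_real_affine[of ?f "-1" 0] by simp
  finally show ?thesis
    using near0 nn_integral_exp_neg_sq_finite[OF c] by (simp add: ennreal_add_eq_top order_le_less_trans)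
qed

lemma sum_sq_powr_le_prod:
  fixes t :: "real^'n::finite"
  assumes A: "A \<noteq> {}" and nz: "\<And>k. t $ k \<noteq> 0" and a: "a \<ge> 0"
  shows "(\<Sum>k\<in>A. (t $ k)\<^sup>2) powr (-a/2) \<le> (\<Prod>k\<in>A. \<bar>t $ k\<bar> powr (-a / card A))"
proof -
  let ?S = "\<Sum>k\<in>A. (t $ k)\<^sup>2"
  have cA: "card A > 0"
    using A by (simp add: card_gt_0_iff)
  have ge: "(t $ k)\<^sup>2 \<le> ?S" if "k \<in> A" for k
    using that by (intro member_le_sum) auto
  obtain k0 where "k0 \<in> A"
    using A by blast
  then have "0 < (t $ k0)\<^sup>2" "(t $ k0)\<^sup>2 \<le> ?S"
    using nz ge by auto
  then have "?S \<noteq> 0"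
    by linarith
  have "(\<Sum>k\<in>A. -a / (2 * card A)) = -a/2"
    using A by simp
  then have "?S powr (-a/2) = ?S powr (\<Sum>k\<in>A. -a / (2 * card A))"
    by simp
  also have "\<dots> = (\<Prod>k\<in>A. ?S powr (-a / (2 * card A)))"
    using \<open>?S \<noteq> 0\<close> by (rule powr_sum)
  also have "\<dots> \<le> (\<Prod>k\<in>A. ((t $ k)\<^sup>2) powr (-a / (2 * card A)))"
    using ge nz a by (intro prod_mono) (auto intro!: powr_mono2' divide_nonneg_pos)
  also have "\<dots> = (\<Prod>k\<in>A. \<bar>t $ k\<bar> powr (-a / card A))"
  proof (rule prod.cong)
    fix k
    have "((t $ k)\<^sup>2) powr (-a / (2 * card A)) = (\<bar>t $ k\<bar> powr 2) powr (-a / (2 * card A))"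
      using powr_realpow'[of "\<bar>t $ k\<bar>" 2] by simp
    also have "\<dots> = \<bar>t $ k\<bar> powr (2 * (-a / (2 * card A)))"
      by (rule powr_powr)
    finally show "((t $ k)\<^sup>2) powr (-a / (2 * card A)) = \<bar>t $ k\<bar> powr (-a / card A)"
      by simp
  qed simp
  finally show ?thesis .
qed

lemma norm_powr_le_prod:
  fixes t :: "real^'n::finite"
  assumes nz: "\<And>k. t $ k \<noteq> 0" and g: "g \<ge> 0" and w: "\<And>k. w k \<ge> 0" and ws: "(\<Sum>k\<in>UNIV. w k) = 1"
  shows "norm t powr (-g) \<le> (\<Prod>k\<in>UNIV. \<bar>t $ k\<bar> powr (-g * w k))"
proof -
  have "norm t \<noteq> 0"
    using nz by (metis norm_eq_zero zero_index)
  have "(\<Sum>k\<in>UNIV. -g * w k) = -g"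
    unfolding sum_distrib_left[symmetric] ws by simp
  then have "norm t powr (-g) = norm t powr (\<Sum>k\<in>UNIV. -g * w k)"
    by simp
  also have "\<dots> = (\<Prod>k\<in>UNIV. norm t powr (-g * w k))"
    using \<open>norm t \<noteq> 0\<close> by (rule powr_sum)
  also have "\<dots> \<le> (\<Prod>k\<in>UNIV. \<bar>t $ k\<bar> powr (-g * w k))"
    using nz g w component_le_norm_cart[of t]
    by (intro prod_mono) (auto intro!: powr_mono2' simp: mult_nonneg_nonneg)
  finally show ?thesis .
qed

lemma exp_neg_norm_sq_prod:
  fixes t :: "real^'n::finite"
  shows "exp (- c * (norm t)\<^sup>2) = (\<Prod>k\<in>UNIV. exp (- c * (t $ k)\<^sup>2))"
  by (simp add: norm_vec_sq sum_distrib_left exp_sum)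

lemma partial_norm_radial_weight_le_prod:
  fixes t :: "real^'n::finite"
  assumes nz: "\<And>k. t $ k \<noteq> 0" and A: "A \<noteq> {}" and a: "a \<ge> 0" and g: "g \<ge> 0"
    and w: "\<And>k. w k \<ge> 0" and ws: "(\<Sum>k\<in>UNIV. w k) = 1"
  shows "(\<Sum>k\<in>A. (t $ k)\<^sup>2) powr (-a/2) * radial_weight c g t
    \<le> (\<Prod>k\<in>UNIV. radial_weight c ((if k \<in> A then a / card A else 0) + g * w k) (t $ k))"
proof -
  let ?P\<^sub>A = "\<Prod>k\<in>UNIV. \<bar>t $ k\<bar> powr (- (if k \<in> A then a / card A else 0))"
  let ?P\<^sub>w = "\<Prod>k\<in>UNIV. \<bar>t $ k\<bar> powr (-g * w k)"
  let ?E = "\<Prod>k\<in>UNIV. exp (- c * (t $ k)\<^sup>2)"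
  have "?P\<^sub>A = (\<Prod>k\<in>A. \<bar>t $ k\<bar> powr (-a / card A))"
    using nz by (intro prod.mono_neutral_cong_right) auto
  then have PA: "(\<Sum>k\<in>A. (t $ k)\<^sup>2) powr (-a/2) \<le> ?P\<^sub>A"
    using sum_sq_powr_le_prod[OF A nz a] by simp
  have "radial_weight c g t \<le> ?P\<^sub>w * ?E"
    unfolding radial_weight_def exp_neg_norm_sq_prod[symmetric]
    by (rule mult_right_mono[OF norm_powr_le_prod[OF nz g w ws]]) simp
  then have "(\<Sum>k\<in>A. (t $ k)\<^sup>2) powr (-a/2) * radial_weight c g t \<le> ?P\<^sub>A * (?P\<^sub>w * ?E)"
    by (rule mult_mono[OF PA]) (simp_all add: prod_nonneg radial_weight_nonneg)
  also have "\<dots> = (\<Prod>k\<in>UNIV. radial_weight c ((if k \<in> A then a / card A else 0) + g * w k) (t $ k))"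
    unfolding prod.distrib[symmetric] radial_weight_def
  proof (intro prod.cong refl)
    fix k
    have "\<bar>t $ k\<bar> powr (- ((if k \<in> A then a / card A else 0) + g * w k))
        = \<bar>t $ k\<bar> powr (- (if k \<in> A then a / card A else 0)) * \<bar>t $ k\<bar> powr (-g * w k)"
      by (simp add: powr_add[symmetric])
    then show "\<bar>t $ k\<bar> powr (- (if k \<in> A then a / card A else 0)) *
        (\<bar>t $ k\<bar> powr (-g * w k) * exp (- c * (t $ k)\<^sup>2))
      = norm (t $ k) powr (- ((if k \<in> A then a / card A else 0) + g * w k)) * exp (- c * (norm (t $ k))\<^sup>2)"
      by simp
  qed
  finally show ?thesis .
qed

lemma nn_integral_lborel_vec_prod:
  fixes f :: "'n::finite \<Rightarrow> real \<Rightarrow> ennreal"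
  assumes [measurable]: "\<And>k. f k \<in> borel_measurable borel"
  shows "(\<integral>\<^sup>+ t. (\<Prod>k\<in>UNIV. f k (t $ k)) \<partial>lborel) = (\<Prod>k\<in>UNIV. \<integral>\<^sup>+ s. f k s \<partial>lborel)"
proof -
  have inj: "inj_on (\<lambda>k::'n. axis k (1::real)) UNIV"
    by (simp add: inj_on_def axis_eq_axis)
  have B: "(Basis :: (real^'n) set) = (\<lambda>k. axis k 1) ` UNIV"
    by (auto simp: Basis_vec_def)
  let ?g = "\<lambda>b::real^'n. f (SOME k. b = axis k 1)"
  have g: "?g (axis k 1) = f k" for k
    by (rule arg_cong[where f=f]) (rule someI2[of _ k]; simp add: axis_eq_axis)
  have "(\<integral>\<^sup>+ t. (\<Prod>b\<in>Basis. ?g b (t \<bullet> b)) \<partial>lborel) = (\<Prod>b\<in>Basis. \<integral>\<^sup>+ s. ?g b s \<partial>lborel)"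
    by (rule nn_integral_lborel_prod) (auto simp: B g)
  then show ?thesis
    by (simp add: B prod.reindex[OF inj] g inner_axis)
qed

lemma AE_lborel_vec_nonzero: "AE t in lborel. \<forall>k. (t :: real^'n::finite) $ k \<noteq> 0"
proof -
  have null: "{t :: real^'n. t $ k = 0} \<in> null_sets lborel" for k
  proof -
    have "{t :: real^'n. t $ k = 0} \<in> sets lborel"
      by measurable
    then show ?thesis
      using negligible_standard_hyperplane_cart[of k]
      by (simp add: negligible_iff_null_sets null_sets_completion_iff)
  qed
  have "AE t in lborel. (t :: real^'n) $ k \<noteq> 0" for k
    by (rule AE_I'[OF null[of k]]) auto
  then show ?thesis
    by (simp add: AE_finite_all[of UNIV, simplified])
qed

lemma nn_integral_partial_norm_radial_weight_le:
  fixes A :: "'n::finite set" and w\<^sub>i\<^sub>n w\<^sub>o\<^sub>u\<^sub>t :: real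
  assumes cA: "card A = K" and n: "K + m = CARD('n)" and K: "K > 0" and a: "a \<ge> 0" and g: "g \<ge> 0"
    and w: "w\<^sub>i\<^sub>n \<ge> 0" "w\<^sub>o\<^sub>u\<^sub>t \<ge> 0" and ws: "real K * w\<^sub>i\<^sub>n + real m * w\<^sub>o\<^sub>u\<^sub>t = 1"
  shows "(\<integral>\<^sup>+ t. ennreal ((\<Sum>k\<in>A. ((t :: real^'n) $ k)\<^sup>2) powr (-a/2) * radial_weight c g t) \<partial>lborel)
    \<le> (\<integral>\<^sup>+ s. ennreal (radial_weight c (a / K + g * w\<^sub>i\<^sub>n) (s::real)) \<partial>lborel) ^ K
      * (\<integral>\<^sup>+ s. ennreal (radial_weight c (g * w\<^sub>o\<^sub>u\<^sub>t) (s::real)) \<partial>lborel) ^ m"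
proof -
  define w where "w k = (if k \<in> A then w\<^sub>i\<^sub>n else w\<^sub>o\<^sub>u\<^sub>t)" for k
  define e where "e k = (if k \<in> A then a / card A else 0) + g * w k" for k
  have cA': "card (UNIV - A) = m"
    using cA n by (simp add: card_Diff_subset)
  have ws': "(\<Sum>k\<in>UNIV. w k) = 1"
    using ws cA cA' unfolding w_def by (simp add: sum.If_cases Diff_eq Int_commute)
  have "A \<noteq> {}"
    using cA K by auto
  have "AE t in lborel. ennreal ((\<Sum>k\<in>A. ((t :: real^'n) $ k)\<^sup>2) powr (-a/2) * radial_weight c g t)
      \<le> (\<Prod>k\<in>UNIV. ennreal (radial_weight c (e k) (t $ k)))"
    using AE_lborel_vec_nonzero
  proof eventually_elim
    case (elim t)
    then show ?case
      using partial_norm_radial_weight_le_prod[OF _ \<open>A \<noteq> {}\<close> a g _ ws', of t c] w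
      by (simp add: e_def w_def prod_ennreal radial_weight_nonneg ennreal_leI)
  qed
  then have "(\<integral>\<^sup>+ t. ennreal ((\<Sum>k\<in>A. ((t :: real^'n) $ k)\<^sup>2) powr (-a/2) * radial_weight c g t) \<partial>lborel)
      \<le> (\<integral>\<^sup>+ t. (\<Prod>k\<in>UNIV. ennreal (radial_weight c (e k) ((t :: real^'n) $ k))) \<partial>lborel)"
    by (rule nn_integral_mono_AE)
  also have "\<dots> = (\<Prod>k\<in>UNIV. \<integral>\<^sup>+ s. ennreal (radial_weight c (e k) (s::real)) \<partial>lborel)"
    by (rule nn_integral_lborel_vec_prod) simp
  also have "\<dots> = (\<Prod>k\<in>UNIV. if k \<in> A
      then \<integral>\<^sup>+ s. ennreal (radial_weight c (a / K + g * w\<^sub>i\<^sub>n) (s::real)) \<partial>lborel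
      else \<integral>\<^sup>+ s. ennreal (radial_weight c (g * w\<^sub>o\<^sub>u\<^sub>t) (s::real)) \<partial>lborel)"
    by (intro prod.cong) (auto simp: e_def w_def cA)
  also have "\<dots> = (\<integral>\<^sup>+ s. ennreal (radial_weight c (a / K + g * w\<^sub>i\<^sub>n) (s::real)) \<partial>lborel) ^ K
      * (\<integral>\<^sup>+ s. ennreal (radial_weight c (g * w\<^sub>o\<^sub>u\<^sub>t) (s::real)) \<partial>lborel) ^ m"
    using cA cA' by (simp add: prod.If_cases Diff_eq Int_commute)
  finally show ?thesis .
qed

text \<open>The weights are chosen so that every one-dimensional exponent stays below \<open>1\<close>: inside \<open>A\<close>
  it is \<open>(a + 2 g / (m + 2)) / K < (a + 2) / K = 1\<close>, outside it is \<open>g / (m + 2) < 1\<close>.\<close>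

lemma nn_integral_partial_norm_radial_weight_bounded:
  fixes a g c :: real and K m :: nat
  assumes K: "real K = a + 2" and a: "a \<ge> 0" and n: "K + m = CARD('n::finite)"
    and g: "0 \<le> g" "g \<le> real m + 1" and c: "c > 0"
  obtains B where "B < \<infinity>" "\<And>A :: 'n set. card A = K \<Longrightarrow>
    (\<integral>\<^sup>+ t. ennreal ((\<Sum>k\<in>A. ((t :: real^'n) $ k)\<^sup>2) powr (-a/2) * radial_weight c g t) \<partial>lborel) \<le> B"
proof -
  define I where "I e = (\<integral>\<^sup>+ s. ennreal (radial_weight c e (s::real)) \<partial>lborel)" for e
  define w\<^sub>i\<^sub>n where "w\<^sub>i\<^sub>n = 2 / real K / (real m + 2)"
  define w\<^sub>o\<^sub>u\<^sub>t where "w\<^sub>o\<^sub>u\<^sub>t = 1 / (real m + 2)"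
  have Kpos: "real K > 0"
    using K a by simp
  have "g * w\<^sub>i\<^sub>n = g / (real m + 2) * (2 / K)"
    by (simp add: w\<^sub>i\<^sub>n_def)
  also have "\<dots> < 1 * (2 / K)"
    using g Kpos by (intro mult_strict_right_mono) auto
  finally have "a / K + g * w\<^sub>i\<^sub>n < 1"
    using K Kpos by (simp add: field_simps)
  moreover have "0 \<le> a / K + g * w\<^sub>i\<^sub>n" "0 \<le> g * w\<^sub>o\<^sub>u\<^sub>t" "g * w\<^sub>o\<^sub>u\<^sub>t < 1"
    using a g Kpos by (simp_all add: w\<^sub>i\<^sub>n_def w\<^sub>o\<^sub>u\<^sub>t_def field_simps)
  ultimately have fin: "I (a / K + g * w\<^sub>i\<^sub>n) ^ K * I (g * w\<^sub>o\<^sub>u\<^sub>t) ^ m < \<infinity>"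
    using nn_integral_radial_weight_real_finite[OF _ _ c]
    by (simp add: I_def ennreal_mult_less_top power_less_top_ennreal)
  have ws: "real K * w\<^sub>i\<^sub>n + real m * w\<^sub>o\<^sub>u\<^sub>t = 1"
    using Kpos by (simp add: w\<^sub>i\<^sub>n_def w\<^sub>o\<^sub>u\<^sub>t_def add_divide_distrib[symmetric])
  have w: "w\<^sub>i\<^sub>n \<ge> 0" "w\<^sub>o\<^sub>u\<^sub>t \<ge> 0"
    by (simp_all add: w\<^sub>i\<^sub>n_def w\<^sub>o\<^sub>u\<^sub>t_def)
  show ?thesis
  proof (rule that[OF fin])
    fix A :: "'n set"
    assume "card A = K"
    then show "(\<integral>\<^sup>+ t. ennreal ((\<Sum>k\<in>A. ((t :: real^'n) $ k)\<^sup>2) powr (-a/2) * radial_weight c g t) \<partial>lborel)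
        \<le> I (a / K + g * w\<^sub>i\<^sub>n) ^ K * I (g * w\<^sub>o\<^sub>u\<^sub>t) ^ m"
      unfolding I_def using Kpos by (intro nn_integral_partial_norm_radial_weight_le[OF _ n _ a g(1) w ws]) auto
  qed
qed

section \<open>Integrating out one column\<close>

lemma gram_det_insert_powr_le:
  fixes f :: "real^'n::finite \<Rightarrow> real^'n"
  assumes j: "j \<notin> S" and f: "orthogonal_transformation f"
    and A: "\<And>k i. k \<in> A \<Longrightarrow> i \<in> S \<Longrightarrow> f (axis k 1) \<bullet> x i = 0"
    and a: "a \<ge> 0" and pos: "(\<Sum>k\<in>A. (t $ k)\<^sup>2) > 0"
  shows "gram_det (insert j S) (x(j := f t)) powr (-a/2)
    \<le> gram_det S x powr (-a/2) * (\<Sum>k\<in>A. (t $ k)\<^sup>2) powr (-a/2)"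
proof (cases "gram_det S x = 0")
  case True
  obtain y where "gram_det (insert j S) (x(j := f t)) = (norm (f t - y))\<^sup>2 * gram_det S x"
    using gram_det_insert[OF j] by metis
  then show ?thesis
    using True by simp
next
  case False
  then have "gram_det S x * (\<Sum>k\<in>A. (t $ k)\<^sup>2) > 0"
    using gram_det_nonneg[of S x] pos by simp
  moreover have "gram_det S x * (\<Sum>k\<in>A. (t $ k)\<^sup>2) \<le> gram_det (insert j S) (x(j := f t))"
    using gram_det_insert_ge[OF j f A] by (simp add: mult.commute)
  ultimately have "gram_det (insert j S) (x(j := f t)) powr (-a/2)
      \<le> (gram_det S x * (\<Sum>k\<in>A. (t $ k)\<^sup>2)) powr (-a/2)"
    using a by (intro powr_mono2') auto
  then show ?thesis
    by (simp add: powr_mult)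
qed

lemma nn_integral_gram_det_insert_le:
  fixes x :: "'p::finite \<Rightarrow> real^'n::finite"
  assumes j: "j \<notin> S" and dim: "card S + K \<le> CARD('n)" and K: "K > 0" and a: "a \<ge> 0"
    and B: "\<And>A :: 'n set. card A = K \<Longrightarrow>
      (\<integral>\<^sup>+ t. ennreal ((\<Sum>k\<in>A. ((t :: real^'n) $ k)\<^sup>2) powr (-a/2) * radial_weight c g t) \<partial>lborel) \<le> B"
  shows "(\<integral>\<^sup>+ v. ennreal (gram_det (insert j S) (x(j := v)) powr (-a/2) * radial_weight c g v) \<partial>lborel)
    \<le> ennreal (gram_det S x powr (-a/2)) * B"
proof -
  have "dim (span (x ` S)) \<le> card S"
    using dim_le_card'[of "x ` S"] card_image_le[of S x] by simp
  then obtain f :: "real^'n \<Rightarrow> real^'n" and A :: "'n set"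
    where f: "orthogonal_transformation f" and cA: "card A = K"
      and orth: "\<And>k v. k \<in> A \<Longrightarrow> v \<in> span (x ` S) \<Longrightarrow> f (axis k 1) \<bullet> v = 0"
    using orthogonal_transformation_adapted_to_subspace[OF subspace_span, of "x ` S" K] dim by auto
  have fx: "f (axis k 1) \<bullet> x i = 0" if "k \<in> A" "i \<in> S" for k i
    using orth that span_base by blast
  let ?F = "\<lambda>v. ennreal (gram_det (insert j S) (x(j := v)) powr (-a/2) * radial_weight c g v)"
  let ?P = "\<lambda>t. ennreal ((\<Sum>k\<in>A. ((t :: real^'n) $ k)\<^sup>2) powr (-a/2) * radial_weight c g t)"
  have "?F \<in> borel_measurable borel"
    by (intro measurable_compose[OF _ measurable_ennreal] borel_measurable_times
        powr_real_measurable borel_measurable_gram_det) auto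
  then have "(\<integral>\<^sup>+ v. ?F v \<partial>lborel) = (\<integral>\<^sup>+ t. ?F (f t) \<partial>lborel)"
    by (rule nn_integral_orthogonal_transformation[OF f])
  also have "\<dots> \<le> (\<integral>\<^sup>+ t. ennreal (gram_det S x powr (-a/2)) * ?P t \<partial>lborel)"
  proof (rule nn_integral_mono_AE)
    show "AE t in lborel. ?F (f t) \<le> ennreal (gram_det S x powr (-a/2)) * ?P t"
      using AE_lborel_vec_nonzero
    proof eventually_elim
      case (elim t)
      obtain k0 where "k0 \<in> A"
        using K cA by fastforce
      then have "(\<Sum>k\<in>A. (t $ k)\<^sup>2) > 0"
        using elim by (intro sum_pos2[of A k0]) auto
      then have "gram_det (insert j S) (x(j := f t)) powr (-a/2) * radial_weight c g t
          \<le> gram_det S x powr (-a/2) * (\<Sum>k\<in>A. (t $ k)\<^sup>2) powr (-a/2) * radial_weight c g t"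
        using fx by (intro mult_right_mono gram_det_insert_powr_le[OF j f _ a] radial_weight_nonneg)
      moreover have "radial_weight c g (f t) = radial_weight c g t"
        by (simp add: radial_weight_def orthogonal_transformation_norm[OF f])
      ultimately show ?case
        by (subst ennreal_mult[symmetric]) (auto intro: ennreal_leI simp: radial_weight_nonneg mult.assoc)
    qed
  qed
  also have "\<dots> = ennreal (gram_det S x powr (-a/2)) * (\<integral>\<^sup>+ t. ?P t \<partial>lborel)"
    by (rule nn_integral_cmult) simp
  also have "\<dots> \<le> ennreal (gram_det S x powr (-a/2)) * B"
    using B[OF cA] by (rule mult_left_mono) simp
  finally show ?thesis .
qed

definition gram_weight ::
    "real \<Rightarrow> real \<Rightarrow> ('p::finite \<Rightarrow> real) \<Rightarrow> 'p set \<Rightarrow> ('p \<Rightarrow> real^'n::finite) \<Rightarrow> ennreal" where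
  "gram_weight a c \<gamma> S x = ennreal (gram_det S x powr (-a/2) * (\<Prod>i\<in>S. radial_weight c (\<gamma> i) (x i)))"

lemma borel_measurable_gram_weight:
  assumes "S \<subseteq> I"
  shows "gram_weight a c \<gamma> S \<in> borel_measurable (\<Pi>\<^sub>M i\<in>I. (lborel :: (real^'n::finite) measure))"
proof -
  have "(\<lambda>x. x i) \<in> borel_measurable (\<Pi>\<^sub>M i\<in>I. (lborel :: (real^'n) measure))" if "i \<in> S" for i
    using that assms by (auto simp: measurable_lborel1)
  then show ?thesis
    unfolding gram_weight_def[abs_def]
    by (intro measurable_compose[OF _ measurable_ennreal] borel_measurable_times powr_real_measurable
        borel_measurable_gram_det borel_measurable_prod measurable_compose[OF _ borel_measurable_radial_weight])
      auto
qed

lemma gram_weight_insert: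
  assumes "j \<notin> S"
  shows "gram_weight a c \<gamma> (insert j S) (x(j := v))
    = ennreal (\<Prod>i\<in>S. radial_weight c (\<gamma> i) (x i))
      * ennreal (gram_det (insert j S) (x(j := v)) powr (-a/2) * radial_weight c (\<gamma> j) v)"
proof -
  have "(\<Prod>i\<in>S. radial_weight c (\<gamma> i) ((x(j := v)) i)) = (\<Prod>i\<in>S. radial_weight c (\<gamma> i) (x i))"
    using assms by (intro prod.cong) auto
  then show ?thesis
    using assms by (simp add: gram_weight_def ennreal_mult[symmetric] radial_weight_nonneg prod_nonneg mult_ac)
qed

lemma nn_integral_gram_weight_insert_le:
  fixes S :: "'p::finite set" and \<gamma> :: "'p \<Rightarrow> real"
  assumes j: "j \<notin> S" and dim: "card S + K \<le> CARD('n)" and K: "K > 0" and a: "a \<ge> 0"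
    and B: "\<And>A :: 'n set. card A = K \<Longrightarrow>
      (\<integral>\<^sup>+ t. ennreal ((\<Sum>k\<in>A. ((t :: real^'n) $ k)\<^sup>2) powr (-a/2) * radial_weight c (\<gamma> j) t) \<partial>lborel) \<le> B"
  shows "(\<integral>\<^sup>+ x. gram_weight a c \<gamma> (insert j S) x \<partial>(\<Pi>\<^sub>M i\<in>insert j S. (lborel :: (real^'n) measure)))
    \<le> (\<integral>\<^sup>+ x. gram_weight a c \<gamma> S x \<partial>(\<Pi>\<^sub>M i\<in>S. (lborel :: (real^'n) measure))) * B"
proof -
  have psf: "product_sigma_finite (\<lambda>_::'p. lborel :: (real^'n) measure)"
    by (simp add: product_sigma_finite_def lborel.sigma_finite_measure_axioms)
  have "(\<integral>\<^sup>+ x. gram_weight a c \<gamma> (insert j S) x \<partial>(\<Pi>\<^sub>M i\<in>insert j S. (lborel :: (real^'n) measure)))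
      = (\<integral>\<^sup>+ x. (\<integral>\<^sup>+ v. gram_weight a c \<gamma> (insert j S) (x(j := v)) \<partial>lborel) \<partial>(\<Pi>\<^sub>M i\<in>S. (lborel :: (real^'n) measure)))"
    by (rule product_sigma_finite.product_nn_integral_insert[OF psf]) (simp_all add: j borel_measurable_gram_weight)
  also have "\<dots> \<le> (\<integral>\<^sup>+ x. gram_weight a c \<gamma> S x * B \<partial>(\<Pi>\<^sub>M i\<in>S. (lborel :: (real^'n) measure)))"
  proof (rule nn_integral_mono)
    fix x :: "'p \<Rightarrow> real^'n"
    have "(\<integral>\<^sup>+ v. gram_weight a c \<gamma> (insert j S) (x(j := v)) \<partial>lborel)
        = ennreal (\<Prod>i\<in>S. radial_weight c (\<gamma> i) (x i))
          * (\<integral>\<^sup>+ v. ennreal (gram_det (insert j S) (x(j := v)) powr (-a/2) * radial_weight c (\<gamma> j) v) \<partial>lborel)"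
      unfolding gram_weight_insert[OF j] by (rule nn_integral_cmult) (intro measurable_compose[OF _ measurable_ennreal]
        borel_measurable_times powr_real_measurable borel_measurable_gram_det; simp)
    also have "\<dots> \<le> ennreal (\<Prod>i\<in>S. radial_weight c (\<gamma> i) (x i)) * (ennreal (gram_det S x powr (-a/2)) * B)"
      using nn_integral_gram_det_insert_le[OF j dim K a B] by (intro mult_left_mono) auto
    also have "\<dots> = gram_weight a c \<gamma> S x * B"
      by (simp add: gram_weight_def ennreal_mult[symmetric] radial_weight_nonneg prod_nonneg mult_ac)
    finally show "(\<integral>\<^sup>+ v. gram_weight a c \<gamma> (insert j S) (x(j := v)) \<partial>lborel) \<le> gram_weight a c \<gamma> S x * B" .
  qed
  also have "\<dots> = (\<integral>\<^sup>+ x. gram_weight a c \<gamma> S x \<partial>(\<Pi>\<^sub>M i\<in>S. (lborel :: (real^'n) measure))) * B"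
    by (rule nn_integral_multc[OF borel_measurable_gram_weight]) simp
  finally show ?thesis .
qed

lemma nn_integral_gram_weight_finite:
  fixes \<gamma> :: "'p::finite \<Rightarrow> real"
  assumes a: "a = real CARD('n::finite) - real CARD('p) - 1" "a \<ge> 0"
    and \<gamma>: "\<And>i. 0 \<le> \<gamma> i \<and> \<gamma> i \<le> real CARD('p)" and c: "c > 0"
  shows "(\<integral>\<^sup>+ x. gram_weight a c \<gamma> S x \<partial>(\<Pi>\<^sub>M i\<in>S. (lborel :: (real^'n) measure))) < \<infinity>"
proof -
  define m where "m = CARD('p) - 1"
  define K where "K = CARD('n) - m"
  have K: "real K = a + 2" "K + m = CARD('n)"
    using a by (auto simp: K_def m_def of_nat_diff)
  then have Kpos: "K > 0"
    using a(2) by simp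
  have "finite S" by simp
  then show ?thesis
  proof (induction S rule: finite_induct)
    case empty
    show ?case
      by (simp add: gram_weight_def gram_det_empty PiM_empty nn_integral_count_space_finite)
  next
    case (insert j S)
    have "card (insert j S) \<le> CARD('p)"
      by (rule card_mono) auto
    then have dim: "card S + K \<le> CARD('n)"
      using insert(1,2) K by (simp add: m_def)
    obtain B where B: "B < \<infinity>" and bound: "\<And>A :: 'n set. card A = K \<Longrightarrow>
        (\<integral>\<^sup>+ t. ennreal ((\<Sum>k\<in>A. ((t :: real^'n) $ k)\<^sup>2) powr (-a/2) * radial_weight c (\<gamma> j) t) \<partial>lborel) \<le> B"
      using nn_integral_partial_norm_radial_weight_bounded[OF K(1) a(2) K(2), of "\<gamma> j" c] \<gamma>[of j] c
      by (auto simp: m_def)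
    have "(\<integral>\<^sup>+ x. gram_weight a c \<gamma> (insert j S) x \<partial>(\<Pi>\<^sub>M i\<in>insert j S. (lborel :: (real^'n) measure)))
        \<le> (\<integral>\<^sup>+ x. gram_weight a c \<gamma> S x \<partial>(\<Pi>\<^sub>M i\<in>S. (lborel :: (real^'n) measure))) * B"
      by (rule nn_integral_gram_weight_insert_le[OF insert(2) dim Kpos a(2)]) (rule bound)
    also have "\<dots> < \<infinity>"
      using insert.IH B by (simp add: ennreal_mult_less_top)
    finally show ?case .
  qed
qed

section \<open>Lebesgue measure on matrices as a product over columns\<close>

lemma prod_Basis_vec:
  fixes g :: "('a::euclidean_space)^'n::finite \<Rightarrow> 'b::comm_monoid_mult"
  shows "(\<Prod>b\<in>Basis. g b) = (\<Prod>i\<in>UNIV. \<Prod>u\<in>Basis. g (axis i u))"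
proof -
  have B: "(Basis :: ('a^'n) set) = (\<lambda>(i, u). axis i u) ` (UNIV \<times> Basis)"
    unfolding Basis_vec_def by auto
  have "inj_on (\<lambda>(i, u). axis i u :: 'a^'n) (UNIV \<times> Basis)"
    by (auto simp: inj_on_def axis_eq_axis nonzero_Basis)
  then show ?thesis
    unfolding B by (simp add: prod.reindex prod.cartesian_product split_def)
qed

lemma borel_measurable_matrix_of_columns [measurable]:
  "(\<lambda>x. \<chi> a i. x i $ a :: real^'p::finite^'n::finite)
    \<in> borel_measurable (\<Pi>\<^sub>M i\<in>UNIV. (lborel :: (real^'n) measure))"
proof -
  have "(\<lambda>x. x i $ a) \<in> borel_measurable (\<Pi>\<^sub>M i\<in>UNIV. (lborel :: (real^'n) measure))" for i a
  proof -
    have "(\<lambda>x. x i) \<in> (\<Pi>\<^sub>M i\<in>UNIV. (lborel :: (real^'n) measure)) \<rightarrow>\<^sub>M borel"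
      using measurable_component_singleton[of i UNIV "\<lambda>_. lborel"] by (simp add: measurable_lborel1)
    moreover have "(\<lambda>v::real^'n. v $ a) \<in> borel_measurable borel"
      by (intro borel_measurable_continuous_onI continuous_intros)
    ultimately show ?thesis
      by (rule measurable_compose)
  qed
  then show ?thesis
    by (subst borel_measurable_euclidean_space) (auto simp: Basis_vec_def inner_axis)
qed

lemma lborel_eq_distr_columns:
  "(lborel :: (real^'p::finite^'n::finite) measure)
    = distr (\<Pi>\<^sub>M i\<in>UNIV. (lborel :: (real^'n) measure)) borel (\<lambda>x. \<chi> a i. x i $ a)"
proof (rule lborel_eqI)
  let ?P = "\<Pi>\<^sub>M i\<in>(UNIV :: 'p set). (lborel :: (real^'n) measure)"
  let ?col = "\<lambda>v :: real^'p^'n. \<lambda>i. \<chi> a. v $ a $ i"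
  fix l u :: "real^'p^'n"
  assume le: "\<And>b. b \<in> Basis \<Longrightarrow> l \<bullet> b \<le> u \<bullet> b"
  have le': "l $ a $ i \<le> u $ a $ i" for a i
    using le[of "axis a (axis i 1)"] by (auto simp: inner_axis Basis_vec_def)
  have "(\<lambda>x. \<chi> a i. x i $ a :: real^'p^'n) -` box l u \<inter> space ?P = (\<Pi>\<^sub>E i\<in>UNIV. box (?col l i) (?col u i))"
  proof -
    have "M \<in> box l u \<longleftrightarrow> (\<forall>a i. l $ a $ i < M $ a $ i \<and> M $ a $ i < u $ a $ i)" for M :: "real^'p^'n"
      by (auto simp: mem_box Basis_vec_def inner_axis)
    then show ?thesis
      by (auto simp: mem_box_cart space_PiM PiE_iff)
  qed
  then have "emeasure (distr ?P borel (\<lambda>x. \<chi> a i. x i $ a)) (box l u)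
      = (\<Prod>i\<in>UNIV. emeasure lborel (box (?col l i) (?col u i)))"
    by (simp add: emeasure_distr product_sigma_finite.emeasure_PiM product_sigma_finite_def
        lborel.sigma_finite_measure_axioms)
  also have "\<dots> = (\<Prod>i\<in>UNIV. ennreal (\<Prod>a\<in>UNIV. u $ a $ i - l $ a $ i))"
  proof (rule prod.cong[OF refl])
    fix i
    have "\<forall>b\<in>Basis. ?col l i \<bullet> b \<le> ?col u i \<bullet> b"
      using le' by (auto simp: Basis_vec_def inner_axis)
    then show "emeasure lborel (box (?col l i) (?col u i)) = ennreal (\<Prod>a\<in>UNIV. u $ a $ i - l $ a $ i)"
      by (simp add: emeasure_lborel_box_eq prod_Basis_vec inner_axis)
  qed
  also have "\<dots> = ennreal (\<Prod>i\<in>UNIV. \<Prod>a\<in>UNIV. u $ a $ i - l $ a $ i)"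
    using le' by (intro prod_ennreal) (simp add: prod_nonneg)
  also have "(\<Prod>i\<in>UNIV. \<Prod>a\<in>UNIV. u $ a $ i - l $ a $ i) = (\<Prod>a\<in>UNIV. \<Prod>i\<in>UNIV. u $ a $ i - l $ a $ i)"
    by (rule prod.swap)
  also have "\<dots> = (\<Prod>b\<in>Basis. (u - l) \<bullet> b)"
    by (simp add: prod_Basis_vec inner_axis)
  finally show "emeasure (distr ?P borel (\<lambda>x. \<chi> a i. x i $ a)) (box l u) = (\<Prod>b\<in>Basis. (u - l) \<bullet> b)" .
qed simp

lemma nn_integral_matrix_columns:
  assumes F: "F \<in> borel_measurable (\<Pi>\<^sub>M i\<in>UNIV. (lborel :: (real^'n::finite) measure))"
  shows "(\<integral>\<^sup>+ M. F (\<lambda>i. mcol M i) \<partial>(lborel :: (real^'p::finite^'n) measure))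
    = (\<integral>\<^sup>+ x. F x \<partial>(\<Pi>\<^sub>M i\<in>UNIV. lborel))"
proof -
  have "(\<lambda>M :: real^'p^'n. \<lambda>i. mcol M i) \<in> borel \<rightarrow>\<^sub>M (\<Pi>\<^sub>M i\<in>UNIV. lborel)"
    by (rule measurable_PiM_single')
      (auto simp: mcol_def measurable_lborel1 intro!: borel_measurable_continuous_onI continuous_intros)
  then have "(\<lambda>M :: real^'p^'n. F (\<lambda>i. mcol M i)) \<in> borel_measurable borel"
    using F by (rule measurable_compose)
  moreover have "(\<lambda>i. mcol (\<chi> a i. x i $ a :: real^'p^'n) i) = x" for x
    by (simp add: fun_eq_iff vec_eq_iff mcol_def)
  ultimately show ?thesis
    by (subst lborel_eq_distr_columns) (simp add: nn_integral_distr)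
qed

lemma normal_density_le_exp_neg_sq:
  assumes N: "N > 0"
  shows "normal_density m (1 / sqrt N) y
    \<le> normal_density 0 (1 / sqrt N) 0 * exp (N * y\<^sup>2 / 2) * exp (- (N / 4) * m\<^sup>2)"
proof -
  have "- (y - m)\<^sup>2 / (2 * (1 / sqrt N)\<^sup>2) \<le> N * y\<^sup>2 / 2 + - (N / 4) * m\<^sup>2"
  proof -
    have "0 \<le> (N / 4) * (2 * y - m)\<^sup>2"
      using N by simp
    then show ?thesis
      using N by (simp add: power_divide field_simps power2_eq_square)
  qed
  then have "exp (- (y - m)\<^sup>2 / (2 * (1 / sqrt N)\<^sup>2)) \<le> exp (N * y\<^sup>2 / 2) * exp (- (N / 4) * m\<^sup>2)"
    by (simp add: exp_add[symmetric])
  then show ?thesis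
    unfolding normal_density_def by (simp add: mult.assoc divide_right_mono)
qed

lemma lik_le:
  fixes Y M :: "real^'p::finite^'n::finite"
  assumes N: "N > 0"
  shows "lik N Y M \<le> (\<Prod>a\<in>UNIV. \<Prod>i\<in>UNIV. normal_density 0 (1 / sqrt N) 0 * exp (N * (Y $ a $ i)\<^sup>2 / 2))
    * (\<Prod>i\<in>UNIV. exp (- (N / 4) * (norm (mcol M i))\<^sup>2))"
proof -
  have "lik N Y M \<le> (\<Prod>a\<in>UNIV. \<Prod>i\<in>UNIV.
      (normal_density 0 (1 / sqrt N) 0 * exp (N * (Y $ a $ i)\<^sup>2 / 2)) * exp (- (N / 4) * (M $ a $ i)\<^sup>2))"
    unfolding lik_def by (intro prod_mono conjI prod_nonneg normal_density_le_exp_neg_sq[OF N]) auto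
  also have "\<dots> = (\<Prod>a\<in>UNIV. \<Prod>i\<in>UNIV. normal_density 0 (1 / sqrt N) 0 * exp (N * (Y $ a $ i)\<^sup>2 / 2))
      * (\<Prod>i\<in>UNIV. \<Prod>a\<in>UNIV. exp (- (N / 4) * (M $ a $ i)\<^sup>2))"
    by (simp only: prod.distrib prod.swap[of _ "UNIV :: 'n set"])
  also have "(\<Prod>i\<in>UNIV. \<Prod>a\<in>UNIV. exp (- (N / 4) * (M $ a $ i)\<^sup>2))
      = (\<Prod>i\<in>UNIV. exp (- (N / 4) * (norm (mcol M i))\<^sup>2))"
    unfolding exp_neg_norm_sq_prod by (simp add: mcol_def)
  finally show ?thesis .
qed

lemma lik_mul_prior_le:
  fixes Y M :: "real^'p::finite^'n::finite"
  assumes N: "N > 0"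
  shows "lik N Y M * prior_MSVS2 \<gamma> M
    \<le> (\<Prod>a\<in>UNIV. \<Prod>i\<in>UNIV. normal_density 0 (1 / sqrt N) 0 * exp (N * (Y $ a $ i)\<^sup>2 / 2))
      * (gram_det UNIV (\<lambda>i. mcol M i) powr (- (real CARD('n) - real CARD('p) - 1) / 2)
         * (\<Prod>i\<in>UNIV. radial_weight (N / 4) (\<gamma> i) (mcol M i)))"
  (is "_ \<le> ?C * _")
proof -
  have "lik N Y M * prior_MSVS2 \<gamma> M \<le> ?C * (\<Prod>i\<in>UNIV. exp (- (N / 4) * (norm (mcol M i))\<^sup>2)) * prior_MSVS2 \<gamma> M"
    using lik_le[OF N, of Y M] by (rule mult_right_mono) (simp add: prior_MSVS2_def prod_nonneg)
  moreover have "(\<chi> a i. mcol M i $ a) = M"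
    by (simp add: vec_eq_iff mcol_def)
  ultimately show ?thesis
    by (simp add: prior_MSVS2_def radial_weight_def gram_det_UNIV prod.distrib mult_ac)
qed

theorem lemma4:
  fixes N :: real and \<gamma> :: "'p::finite \<Rightarrow> real" and Y :: "real^'p^'n::finite"
  assumes "real CARD('n) - real CARD('p) - 1 > 0"
    and "N > 0"
    and "\<And>i. 0 \<le> \<gamma> i \<and> \<gamma> i \<le> real CARD('p)"
  shows "m_MSVS2 N \<gamma> Y < \<infinity>"
proof -
  define a where "a = real CARD('n) - real CARD('p) - 1"
  define C where "C = (\<Prod>a\<in>UNIV. \<Prod>i\<in>UNIV. normal_density 0 (1 / sqrt N) 0 * exp (N * (Y $ a $ i)\<^sup>2 / 2))"
  have "C \<ge> 0"
    unfolding C_def by (intro prod_nonneg) auto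
  then have "ennreal (lik N Y M * prior_MSVS2 \<gamma> M) \<le> ennreal C * gram_weight a (N / 4) \<gamma> UNIV (\<lambda>i. mcol (M :: real^'p^'n) i)" for M
    using lik_mul_prior_le[OF assms(2), of Y M \<gamma>]
    by (simp add: gram_weight_def a_def C_def ennreal_mult'[symmetric] ennreal_leI)
  then have "m_MSVS2 N \<gamma> Y \<le> (\<integral>\<^sup>+ M. ennreal C * gram_weight a (N / 4) \<gamma> UNIV (\<lambda>i. mcol (M :: real^'p^'n) i) \<partial>lborel)"
    unfolding m_MSVS2_def by (rule nn_integral_mono)
  also have "\<dots> = (\<integral>\<^sup>+ x. ennreal C * gram_weight a (N / 4) \<gamma> UNIV x \<partial>(\<Pi>\<^sub>M i\<in>UNIV. (lborel :: (real^'n) measure)))"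
    using borel_measurable_gram_weight[OF subset_refl, of a "N / 4" \<gamma>]
    by (intro nn_integral_matrix_columns borel_measurable_times_ennreal borel_measurable_const)
  also have "\<dots> = ennreal C * (\<integral>\<^sup>+ x. gram_weight a (N / 4) \<gamma> UNIV x \<partial>(\<Pi>\<^sub>M i\<in>UNIV. (lborel :: (real^'n) measure)))"
    using borel_measurable_gram_weight[OF subset_refl, of a "N / 4" \<gamma>] by (rule nn_integral_cmult)
  also have "\<dots> < \<infinity>"
    using nn_integral_gram_weight_finite[OF a_def _ assms(3)] assms(1,2) by (simp add: a_def ennreal_mult_less_top)
  finally show ?thesis .
qed

end
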